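(* Let $\mathbf X$ be a label cover instance and $\mathcal M$ a minion. Then $\kappa_{\mathrm{arc}}(\mathbf X)\to\mathcal M$ if and only if $\mathbf X\to\omega(\mathcal M)$ (minions viewed as structures in the label cover signature).
   Context: Label cover. The label cover signature has a type $X$ for each finite set $X$ and a binary symbol $E_\pi$ of arity $(X,Y)$ for each map $\pi\colon X\to Y$ between finite sets. A homomorphism between structures of this signature is a type-preserving family of maps preserving every $E_\pi$. A label cover instance is a structure $\mathbf S$ of this signature with finitely many nonempty domains, all finite. Arc-consistency on label cover. For a label cover instance $\mathbf S$, let $D_v$ be the type of $v$. Set $\mathcal F_v=D_v$ for each element $v$; while something changes, for each constraint $(v,w)\in E_\pi^{\mathbf S}$ ($\pi\colon D_v\to D_w$), remove from $\mathcal F_w$ elements not in $\pi(\mathcal F_v)$ and remove from $\mathcal F_v$ elements $x$ with $\pi(x)\notin\mathcal F_w$. The output $\kappa_{\mathrm{arc}}(\mathbf S)$ is the label cover instance with an element $v$ of type $\mathcal F_v$ for each element $v$ of $\mathbf S$, and a constraint $(v,w)\in E_{\pi'}$ for each constraint $(v,w)\in E_\pi^{\mathbf S}$, where $\pi'=\pi|_{\mathcal F_v}\colon\mathcal F_v\to\mathcal F_w$. Minions. An (abstract) minion $\mathcal M$ assigns to each finite set $X$ a set $\mathcal M^{(X)}$, nonempty iff $X\ne\emptyset$, and to each map $\pi\colon X\to Y$ a map $\mathcal M^{(X)}\to\mathcal M^{(Y)}$, $f\mapsto f^\pi$, functorially (identities to identities, $(f^\sigma)^\pi=f^{\pi\circ\sigma}$).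 A minion $\mathcal M$ is viewed as the (infinite) structure in the label cover signature with domain $\mathcal M^{(X)}$ of type $X$ and $E_\pi=\{(f,f^\pi)\mid f\in\mathcal M^{(X)}\}$ for $\pi\colon X\to Y$. The minion $\omega(\mathcal M)$. $\omega(\mathcal M)^{(X)}=\{(Y,f)\mid Y\subseteq X,\ f\in\mathcal M^{(Y)}\}$, and for $\pi\colon X\to Y'$, $(Z,f)^\pi=(\pi(Z),f^{\pi|_Z})$, where $\pi|_Z\colon Z\to\pi(Z)$ is the restriction. *)

theory Defs
  imports Main "HOL-Library.FuncSet"
begin

text \<open>
Finite sets (types of the label cover signature) are finite subsets of a fixed
label type 'a.  A map pi : X -> Y between finite sets is an extensional function
pi in X ->E Y (the triple (X, Y, pi) determines the map).
\<close>

text \<open>A minion is given by its sets Mel X (for finite X) and its minor operation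
Mmin X Y pi f = f^pi for pi : X -> Y.\<close>

definition is_minion ::
  "('a set \<Rightarrow> 'm set) \<Rightarrow> ('a set \<Rightarrow> 'a set \<Rightarrow> ('a \<Rightarrow> 'a) \<Rightarrow> 'm \<Rightarrow> 'm) \<Rightarrow> bool" where
  "is_minion Mel Mmin \<longleftrightarrow>
     (\<forall>X. finite X \<longrightarrow> (Mel X \<noteq> {} \<longleftrightarrow> X \<noteq> {})) \<and>
     (\<forall>X Y pi f. finite X \<and> finite Y \<and> pi \<in> X \<rightarrow>\<^sub>E Y \<and> f \<in> Mel X
        \<longrightarrow> Mmin X Y pi f \<in> Mel Y) \<and>
     (\<forall>X f. finite X \<and> f \<in> Mel X \<longrightarrow> Mmin X X (restrict id X) f = f) \<and>
     (\<forall>X Y Z sigma pi f. finite X \<and> finite Y \<and> finite Z \<and>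
        sigma \<in> X \<rightarrow>\<^sub>E Y \<and> pi \<in> Y \<rightarrow>\<^sub>E Z \<and> f \<in> Mel X
        \<longrightarrow> Mmin Y Z pi (Mmin X Y sigma f) = Mmin X Z (compose X pi sigma) f)"

definition omega_el :: "('a set \<Rightarrow> 'm set) \<Rightarrow> 'a set \<Rightarrow> ('a set \<times> 'm) set" where
  "omega_el Mel X = {(Y, f). Y \<subseteq> X \<and> f \<in> Mel Y}"

definition omega_min ::
  "('a set \<Rightarrow> 'a set \<Rightarrow> ('a \<Rightarrow> 'a) \<Rightarrow> 'm \<Rightarrow> 'm) \<Rightarrow>
   'a set \<Rightarrow> 'a set \<Rightarrow> ('a \<Rightarrow> 'a) \<Rightarrow> ('a set \<times> 'm) \<Rightarrow> ('a set \<times> 'm)" where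
  "omega_min Mmin X Y pi p =
     (case p of (Z, f) \<Rightarrow> (pi ` Z, Mmin Z (pi ` Z) (restrict pi Z) f))"

text \<open>An instance: a set V of elements, the type D v of each element, and the set C
of constraints; (v, w, pi) in C means (v, w) in E_pi with pi : D v -> D w.\<close>

definition lc_instance ::
  "'v set \<Rightarrow> ('v \<Rightarrow> 'a set) \<Rightarrow> ('v \<times> 'v \<times> ('a \<Rightarrow> 'a)) set \<Rightarrow> bool" where
  "lc_instance V D C \<longleftrightarrow> finite V \<and> (\<forall>v\<in>V. finite (D v)) \<and>
     (\<forall>(v, w, pi)\<in>C. v \<in> V \<and> w \<in> V \<and> pi \<in> D v \<rightarrow>\<^sub>E D w)"

definition lc_hom ::
  "'v set \<Rightarrow> ('v \<Rightarrow> 'a set) \<Rightarrow> ('v \<times> 'v \<times> ('a \<Rightarrow> 'a)) set \<Rightarrow>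
   ('a set \<Rightarrow> 'm set) \<Rightarrow> ('a set \<Rightarrow> 'a set \<Rightarrow> ('a \<Rightarrow> 'a) \<Rightarrow> 'm \<Rightarrow> 'm) \<Rightarrow>
   ('v \<Rightarrow> 'm) \<Rightarrow> bool" where
  "lc_hom V D C Mel Mmin h \<longleftrightarrow>
     (\<forall>v\<in>V. h v \<in> Mel (D v)) \<and>
     (\<forall>(v, w, pi)\<in>C. Mmin (D v) (D w) pi (h v) = h w)"

definition lc_hom_exists ::
  "'v set \<Rightarrow> ('v \<Rightarrow> 'a set) \<Rightarrow> ('v \<times> 'v \<times> ('a \<Rightarrow> 'a)) set \<Rightarrow>
   ('a set \<Rightarrow> 'm set) \<Rightarrow> ('a set \<Rightarrow> 'a set \<Rightarrow> ('a \<Rightarrow> 'a) \<Rightarrow> 'm \<Rightarrow> 'm) \<Rightarrow> bool" where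
  "lc_hom_exists V D C Mel Mmin \<longleftrightarrow> (\<exists>h. lc_hom V D C Mel Mmin h)"

definition arc_step ::
  "('v \<times> 'v \<times> ('a \<Rightarrow> 'a)) set \<Rightarrow> ('v \<Rightarrow> 'a set) \<Rightarrow> ('v \<Rightarrow> 'a set)" where
  "arc_step C F = (\<lambda>v. F v
      \<inter> {x. \<forall>(u, w, pi)\<in>C. u = v \<longrightarrow> pi x \<in> F w}
      \<inter> {y. \<forall>(u, w, pi)\<in>C. w = v \<longrightarrow> y \<in> pi ` F u})"

text \<open>The final family: iterate from F = D until nothing changes; since the
sequence is decreasing and eventually constant, its result is the intersection.\<close>

definition arc_dom ::
  "('v \<Rightarrow> 'a set) \<Rightarrow> ('v \<times> 'v \<times> ('a \<Rightarrow> 'a)) set \<Rightarrow> ('v \<Rightarrow> 'a set)" where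
  "arc_dom D C = (\<lambda>v. \<Inter>n. ((arc_step C ^^ n) D) v)"

definition arc_cons ::
  "('v \<Rightarrow> 'a set) \<Rightarrow> ('v \<times> 'v \<times> ('a \<Rightarrow> 'a)) set \<Rightarrow> ('v \<times> 'v \<times> ('a \<Rightarrow> 'a)) set" where
  "arc_cons D C = (\<lambda>(v, w, pi). (v, w, restrict pi (arc_dom D C v))) ` C"

end

theory Submission
  imports Defs
begin

text \<open>
A homomorphism into \<open>\<omega>(M)\<close> picks at each element v a subset \<open>Y v\<close> of its domain
together with an element of \<open>M\<close> of type \<open>Y v\<close>, and the constraints force \<open>\<pi>(Y v) = Y w\<close>.
No value of such a family is ever removed by arc-consistency, so \<open>Y v\<close> is contained in
the arc-consistent domain \<open>F v\<close>, and pushing the chosen elements forward along the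
inclusions \<open>Y v \<subseteq> F v\<close> yields a homomorphism from \<open>\<kappa>\<^sub>a\<^sub>r\<^sub>c(X)\<close> to M. Conversely,
the arc-consistent domains satisfy \<open>\<pi>(F v) = F w\<close> (the iteration stabilises since the
domains are finite), so a homomorphism h from \<open>\<kappa>\<^sub>a\<^sub>r\<^sub>c(X)\<close> gives \<open>v \<mapsto> (F v, h v)\<close>.
\<close>

lemma decreasing_finite_chain_Inter_attained:
  fixes A :: "nat \<Rightarrow> 'a set"
  assumes dec: "\<And>n. A (Suc n) \<subseteq> A n" and fin: "finite (A 0)"
  shows "\<exists>N. (\<Inter>n. A n) = A N"
proof -
  have anti: "m \<le> n \<Longrightarrow> A n \<subseteq> A m" for m n
    by (induction n rule: dec_induct) (use dec in auto)
  have finA: "finite (A n)" for n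
    using anti[of 0 n] fin finite_subset by blast
  obtain N where N: "\<And>k. card (A N) \<le> card (A k)"
    using ex_has_least_nat[of "\<lambda>_. True" 0 "\<lambda>k. card (A k)"] by blast
  have "A N \<subseteq> A n" for n
  proof (cases "N \<le> n")
    case True
    then have "A n \<subseteq> A N" by (rule anti)
    with N[of n] finA[of N] card_subset_eq show ?thesis by (metis antisym card_mono)
  qed (simp add: anti)
  then show ?thesis by blast
qed

lemma lc_instance_constraint:
  "lc_instance V D C \<Longrightarrow> (v, w, pi) \<in> C \<Longrightarrow> v \<in> V \<and> w \<in> V \<and> pi \<in> D v \<rightarrow>\<^sub>E D w"
  unfolding lc_instance_def by fast

lemma lc_instance_finite: "lc_instance V D C \<Longrightarrow> v \<in> V \<Longrightarrow> finite (D v)"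
  unfolding lc_instance_def by blast

lemma arc_step_iff:
  "x \<in> arc_step C F v \<longleftrightarrow> x \<in> F v \<and>
     (\<forall>(u, w, pi)\<in>C. u = v \<longrightarrow> pi x \<in> F w) \<and>
     (\<forall>(u, w, pi)\<in>C. w = v \<longrightarrow> x \<in> pi ` F u)"
  unfolding arc_step_def by simp

lemma arc_step_subset: "arc_step C F v \<subseteq> F v"
  by (auto simp: arc_step_iff)

lemma arc_dom_subset_iter: "arc_dom D C v \<subseteq> (arc_step C ^^ n) D v"
  unfolding arc_dom_def by blast

lemma arc_dom_subset: "arc_dom D C v \<subseteq> D v"
  using arc_dom_subset_iter[of D C v 0] by simp

lemma arc_dom_eq_iter:
  assumes "finite (D v)"
  shows "\<exists>N. arc_dom D C v = (arc_step C ^^ N) D v"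
  unfolding arc_dom_def
  by (rule decreasing_finite_chain_Inter_attained) (simp_all add: arc_step_subset assms)

lemma arc_dom_image:
  assumes inst: "lc_instance V D C" and c: "(u, w, pi) \<in> C"
  shows "pi ` arc_dom D C u = arc_dom D C w"
proof
  show "pi ` arc_dom D C u \<subseteq> arc_dom D C w"
  proof (clarsimp simp: arc_dom_def)
    fix x n assume "\<forall>n. x \<in> (arc_step C ^^ n) D u"
    then have "x \<in> arc_step C ((arc_step C ^^ n) D) u" by (metis funpow.simps(2) o_apply)
    then have "\<forall>(u', w', pi')\<in>C. u' = u \<longrightarrow> pi' x \<in> (arc_step C ^^ n) D w'"
      by (simp add: arc_step_iff)
    with c show "pi x \<in> (arc_step C ^^ n) D w" by blast
  qed
  have "finite (D u)"
    using lc_instance_constraint[OF inst c] lc_instance_finite[OF inst] by blast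
  from arc_dom_eq_iter[where D = D and v = u and C = C, OF this]
  obtain N where N: "arc_dom D C u = (arc_step C ^^ N) D u" ..
  show "arc_dom D C w \<subseteq> pi ` arc_dom D C u"
  proof
    fix y assume "y \<in> arc_dom D C w"
    then have "y \<in> arc_step C ((arc_step C ^^ N) D) w"
      using arc_dom_subset_iter[of D C w "Suc N"] by auto
    then have "\<forall>(u', w', pi')\<in>C. w' = w \<longrightarrow> y \<in> pi' ` (arc_step C ^^ N) D u'"
      by (simp add: arc_step_iff)
    with c N show "y \<in> pi ` arc_dom D C u" by blast
  qed
qed

lemma arc_dom_greatest:
  assumes inst: "lc_instance V D C"
    and sub: "\<And>v. v \<in> V \<Longrightarrow> Y v \<subseteq> D v"
    and onto: "\<And>v w pi. (v, w, pi) \<in> C \<Longrightarrow> pi ` Y v = Y w"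
    and v: "v \<in> V"
  shows "Y v \<subseteq> arc_dom D C v"
proof -
  have "\<forall>v\<in>V. Y v \<subseteq> (arc_step C ^^ n) D v" for n
  proof (induction n)
    case 0
    then show ?case using sub by simp
  next
    case (Suc n)
    have "Y v \<subseteq> arc_step C ((arc_step C ^^ n) D) v" if "v \<in> V" for v
    proof
      fix x assume x: "x \<in> Y v"
      have "pi x \<in> (arc_step C ^^ n) D w" if "(v, w, pi) \<in> C" for w pi
        using Suc.IH onto[OF that] lc_instance_constraint[OF inst that] x by blast
      moreover have "x \<in> pi ` (arc_step C ^^ n) D u" if "(u, v, pi) \<in> C" for u pi
        using Suc.IH onto[OF that] lc_instance_constraint[OF inst that] x by blast
      ultimately show "x \<in> arc_step C ((arc_step C ^^ n) D) v"
        using Suc.IH \<open>v \<in> V\<close> x by (auto simp: arc_step_iff)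
    qed
    then show ?case by simp
  qed
  with v show ?thesis unfolding arc_dom_def by blast
qed

lemma minion_minor_mem:
  assumes "is_minion Mel Mmin" "finite X" "finite Y" "pi \<in> X \<rightarrow>\<^sub>E Y" "f \<in> Mel X"
  shows "Mmin X Y pi f \<in> Mel Y"
proof -
  have "\<forall>X Y pi f. finite X \<and> finite Y \<and> pi \<in> X \<rightarrow>\<^sub>E Y \<and> f \<in> Mel X
      \<longrightarrow> Mmin X Y pi f \<in> Mel Y"
    using assms(1) unfolding is_minion_def by (elim conjE)
  with assms(2-) show ?thesis by blast
qed

lemma minion_minor_comp:
  assumes "is_minion Mel Mmin" "finite X" "finite Y" "finite Z"
    "sigma \<in> X \<rightarrow>\<^sub>E Y" "pi \<in> Y \<rightarrow>\<^sub>E Z" "f \<in> Mel X"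
  shows "Mmin Y Z pi (Mmin X Y sigma f) = Mmin X Z (compose X pi sigma) f"
proof -
  have "\<forall>X Y Z sigma pi f. finite X \<and> finite Y \<and> finite Z \<and>
      sigma \<in> X \<rightarrow>\<^sub>E Y \<and> pi \<in> Y \<rightarrow>\<^sub>E Z \<and> f \<in> Mel X
      \<longrightarrow> Mmin Y Z pi (Mmin X Y sigma f) = Mmin X Z (compose X pi sigma) f"
    using assms(1) unfolding is_minion_def by (elim conjE)
  with assms(2-) show ?thesis by blast
qed

lemma minion_minor_restrict_comp:
  assumes M: "is_minion Mel Mmin" and fin: "finite X" "finite Y" "finite Z"
    and sigma: "sigma ` X \<subseteq> Y" and pi: "pi ` Y \<subseteq> Z" and f: "f \<in> Mel X"
  shows "Mmin Y Z (restrict pi Y) (Mmin X Y (restrict sigma X) f)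
       = Mmin X Z (restrict (pi \<circ> sigma) X) f"
proof -
  have "compose X (restrict pi Y) (restrict sigma X) = restrict (pi \<circ> sigma) X"
    using sigma by (intro ext) (auto simp: compose_def)
  moreover have "restrict sigma X \<in> X \<rightarrow>\<^sub>E Y" "restrict pi Y \<in> Y \<rightarrow>\<^sub>E Z"
    using sigma pi by auto
  ultimately show ?thesis
    using minion_minor_comp[OF M fin _ _ f] by simp
qed

lemma lc_hom_omega_of_arc:
  assumes inst: "lc_instance V D C"
    and h: "lc_hom V (arc_dom D C) (arc_cons D C) Mel Mmin h"
  shows "lc_hom V D C (omega_el Mel) (omega_min Mmin) (\<lambda>v. (arc_dom D C v, h v))"
  unfolding lc_hom_def
proof (intro conjI ballI)
  fix v assume "v \<in> V"
  with h show "(arc_dom D C v, h v) \<in> omega_el Mel (D v)"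
    by (auto simp: lc_hom_def omega_el_def arc_dom_subset)
next
  fix c assume "c \<in> C"
  then obtain v w pi where c: "c = (v, w, pi)" "(v, w, pi) \<in> C"
    by (cases c) auto
  then have "(v, w, restrict pi (arc_dom D C v)) \<in> arc_cons D C"
    unfolding arc_cons_def by force
  with h have "Mmin (arc_dom D C v) (arc_dom D C w) (restrict pi (arc_dom D C v)) (h v) = h w"
    unfolding lc_hom_def by fast
  with arc_dom_image[OF inst c(2)] c(1)
  show "case c of (v, w, pi) \<Rightarrow>
      omega_min Mmin (D v) (D w) pi (arc_dom D C v, h v) = (arc_dom D C w, h w)"
    by (simp add: omega_min_def)
qed

lemma lc_hom_arc_of_omega:
  assumes inst: "lc_instance V D C" and M: "is_minion Mel Mmin"
    and g: "lc_hom V D C (omega_el Mel) (omega_min Mmin) g"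
  defines "h \<equiv> \<lambda>v. Mmin (fst (g v)) (arc_dom D C v) (restrict id (fst (g v))) (snd (g v))"
  shows "lc_hom V (arc_dom D C) (arc_cons D C) Mel Mmin h"
proof -
  let ?F = "arc_dom D C"
  define Y where "Y v = fst (g v)" for v
  define f where "f v = snd (g v)" for v
  have Y: "Y v \<subseteq> D v" "f v \<in> Mel (Y v)" if "v \<in> V" for v
  proof -
    have "g v \<in> omega_el Mel (D v)"
      using g that by (simp add: lc_hom_def)
    then show "Y v \<subseteq> D v" "f v \<in> Mel (Y v)"
      by (cases "g v"; simp add: omega_el_def Y_def f_def)+
  qed
  have gC: "pi ` Y v = Y w" "Mmin (Y v) (Y w) (restrict pi (Y v)) (f v) = f w"
    if "(v, w, pi) \<in> C" for v w pi
  proof -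
    have "\<forall>(v, w, pi)\<in>C. omega_min Mmin (D v) (D w) pi (g v) = g w"
      using g unfolding lc_hom_def by (rule conjunct2)
    from bspec[OF this that] have "omega_min Mmin (D v) (D w) pi (g v) = g w"
      by simp
    then have "g w = (pi ` Y v, Mmin (Y v) (pi ` Y v) (restrict pi (Y v)) (f v))"
      unfolding Y_def f_def omega_min_def by (cases "g v") simp
    then show "pi ` Y v = Y w" "Mmin (Y v) (Y w) (restrict pi (Y v)) (f v) = f w"
      unfolding Y_def f_def by simp_all
  qed
  have YF: "Y v \<subseteq> ?F v" if "v \<in> V" for v
    using arc_dom_greatest[OF inst Y(1) gC(1) that] .
  have finF: "finite (?F v)" if "v \<in> V" for v
    using lc_instance_finite[OF inst that] arc_dom_subset finite_subset by metis
  have finY: "finite (Y v)" if "v \<in> V" for v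
    using finF[OF that] YF[OF that] finite_subset by metis
  show ?thesis
    unfolding lc_hom_def
  proof (intro conjI ballI)
    fix v assume v: "v \<in> V"
    have "restrict id (Y v) \<in> Y v \<rightarrow>\<^sub>E ?F v"
      using YF[OF v] by auto
    from minion_minor_mem[OF M finY[OF v] finF[OF v] this Y(2)[OF v]]
    show "h v \<in> Mel (?F v)"
      by (simp add: h_def Y_def f_def)
  next
    fix c assume "c \<in> arc_cons D C"
    then obtain v w pi where c: "(v, w, pi) \<in> C" and cc: "c = (v, w, restrict pi (?F v))"
      unfolding arc_cons_def by auto
    have v: "v \<in> V" and w: "w \<in> V"
      using lc_instance_constraint[OF inst c] by auto
    text \<open>Both sides are the minor of \<open>f v\<close> along \<open>\<pi>\<close> restricted to \<open>Y v\<close>.\<close>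
    have "Mmin (?F v) (?F w) (restrict pi (?F v)) (h v)
        = Mmin (Y v) (?F w) (restrict pi (Y v)) (f v)"
      using minion_minor_restrict_comp[OF M finY[OF v] finF[OF v] finF[OF w] _ _ Y(2)[OF v],
          of id pi] YF[OF v] arc_dom_image[OF inst c]
      by (simp add: h_def Y_def f_def)
    also have "\<dots> = h w"
      using minion_minor_restrict_comp[OF M finY[OF v] finY[OF w] finF[OF w] _ _ Y(2)[OF v],
          of pi id] YF[OF w] gC[OF c]
      by (simp add: h_def Y_def f_def)
    finally show "case c of (v, w, pi) \<Rightarrow> Mmin (?F v) (?F w) pi (h v) = h w"
      by (simp add: cc)
  qed
qed

theorem mainTheorem14:
  fixes V :: "'v set" and D :: "'v \<Rightarrow> 'a set"
    and C :: "('v \<times> 'v \<times> ('a \<Rightarrow> 'a)) set"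
    and Mel :: "'a set \<Rightarrow> 'm set"
    and Mmin :: "'a set \<Rightarrow> 'a set \<Rightarrow> ('a \<Rightarrow> 'a) \<Rightarrow> 'm \<Rightarrow> 'm"
  assumes "lc_instance V D C"
    and "is_minion Mel Mmin"
  shows "lc_hom_exists V (arc_dom D C) (arc_cons D C) Mel Mmin
     \<longleftrightarrow> lc_hom_exists V D C (omega_el Mel) (omega_min Mmin)"
  using lc_hom_omega_of_arc[OF assms(1)] lc_hom_arc_of_omega[OF assms]
  unfolding lc_hom_exists_def by blast

end
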